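(* Let $b_1<b_2$, $T\ge b_1+b_2$ be positive integers, $k=T-b_1$, and let $P'_0,\dots,P'_{T-b_1}\in\mathbb F^{k\times b_2}$, with $P'_\ell=0$ for $\ell>T-b_1$. Let $\mathbf P_{\mathrm{RD}}=(P'_{b_2+j-i})_{i\in[b_2],\,j\in[T-b_1]}$, a square $(T-b_1)b_2\times(T-b_1)b_2$ matrix. If $\mathbf P_{\mathrm{RD}}$ is invertible (equivalently, in the RD code $P[t]=\sum_i R[t-i]P'_i$ of a rate-optimal TBSC, the $b_2$ message packets erased in a burst are uniquely recovered from the next $T-b_1$ parity packets), then $P'_{T-b_1}$ has full column rank $b_2$.
   Context: The rate-optimal RD link is modeled as a systematic convolutional code with message packets $R[t]\in\mathbb F^{k}$, $k=T-b_1$, parity packets $P[t]=\sum_{i=0}^{T-b_1}R[t-i]P'_i\in\mathbb F^{b_2}$; for a burst erasing $R[t],\dots,R[t+b_2-1]$, the modified parities $(\bar P[t+b_2],\dots,\bar P[t+b_2+T-b_1-1])=(R[t],\dots,R[t+b_2-1])\,\mathbf P_{\mathrm{RD}}$. *)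

theory Defs
  imports "Jordan_Normal_Form.DL_Rank"
begin

text \<open>We use 0-based block
  indices i in {0..<b2}, j in {0..<T-b1}; the block index b2+j-i is shift-invariant.\<close>

definition P_RD :: "nat \<Rightarrow> nat \<Rightarrow> nat \<Rightarrow> (nat \<Rightarrow> 'a::field mat) \<Rightarrow> 'a mat" where
  "P_RD T b1 b2 Pp = (let k = T - b1 in
     mat (b2 * k) (k * b2)
       (\<lambda>(r, c). (if b2 + c div b2 - r div k \<le> T - b1
                  then Pp (b2 + c div b2 - r div k) $$ (r mod k, c mod b2) else 0)))"

end

theory Submission
  imports Defs "Jordan_Normal_Form.Matrix_Kernel"
begin

text \<open>In the last block column of P_RD every block above P'_{T-b1} is zero: in block row
  i < b2 - 1 the block index is b2 + (T-b1-1) - i > T-b1, where P' vanishes by convention.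
  Hence if P'_{T-b1} x = 0, the vector carrying x in the last block column and zeros elsewhere
  lies in the kernel of P_RD; invertibility forces x = 0, so P'_{T-b1} has trivial kernel,
  i.e. full column rank.\<close>

lemma (in vec_space) rank_eq_if_mat_kernel_trivial:
  assumes A: "A \<in> carrier_mat n nc"
    and ker: "mat_kernel A \<subseteq> {0\<^sub>v nc}"
  shows "rank A = nc"
proof -
  have zero_if_in_kernel: "v = 0\<^sub>v nc" if "v \<in> carrier_vec nc" "A *\<^sub>v v = 0\<^sub>v n" for v
    using ker mat_kernelI[OF A that] by blast
  have distinct: "distinct (cols A)"
  proof (rule ccontr)
    assume "\<not> distinct (cols A)"
    then obtain i j where ij: "i < nc" "j < nc" "i \<noteq> j" "col A i = col A j"
      using A by (auto simp: distinct_conv_nth)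
    define v :: "'a vec" where "v = unit_vec nc i - unit_vec nc j"
    have col_unit: "A *\<^sub>v unit_vec nc l = col A l" if "l < nc" for l
      using A that by (intro eq_vecI) auto
    have "A *\<^sub>v v = col A i - col A j"
      unfolding v_def using A ij by (simp add: mult_minus_distrib_mat_vec col_unit)
    also have "\<dots> = 0\<^sub>v n" using ij A by auto
    finally have "v = 0\<^sub>v nc" using zero_if_in_kernel by (simp add: v_def)
    moreover have "v $ i = 1" using ij by (simp add: v_def)
    ultimately show False using ij by simp
  qed
  have "lin_indpt (set (cols A))"
    using lin_depE[OF A _ distinct] zero_if_in_kernel by metis
  then show ?thesis using lin_indpt_full_rank[OF A distinct] by blast
qed

lemma invertible_mat_kernel_trivial:
  assumes A: "A \<in> carrier_mat n n" and "invertible_mat A"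
  shows "mat_kernel A \<subseteq> {0\<^sub>v n}"
proof
  fix v assume v: "v \<in> mat_kernel A"
  obtain B where BA: "B * A = 1\<^sub>m (dim_row B)" and AB: "A * B = 1\<^sub>m n"
    using \<open>invertible_mat A\<close> A unfolding invertible_mat_def inverts_mat_def by auto
  have B: "B \<in> carrier_mat n n"
    using arg_cong[OF BA, of dim_col] arg_cong[OF AB, of dim_col] A by auto
  then have BA: "B * A = 1\<^sub>m n" using BA by simp
  have "v = (B * A) *\<^sub>v v" using BA mat_kernel_carrier[OF A] v by auto
  also have "\<dots> = B *\<^sub>v (A *\<^sub>v v)"
    using A B mat_kernel_carrier[OF A] v by (auto intro: assoc_mult_mat_vec)
  also have "\<dots> = 0\<^sub>v n" using mat_kernelD[OF A v] B by auto
  finally show "v \<in> {0\<^sub>v n}" by simp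
qed

lemma mat_kernel_lower_right_block_trivial:
  fixes A C D :: "'a::comm_ring_1 mat"
  assumes A: "A \<in> carrier_mat nr1 nc1" and C: "C \<in> carrier_mat nr2 nc1"
    and D: "D \<in> carrier_mat nr2 nc2"
    and ker: "mat_kernel (four_block_mat A (0\<^sub>m nr1 nc2) C D) \<subseteq> {0\<^sub>v (nc1 + nc2)}"
  shows "mat_kernel D \<subseteq> {0\<^sub>v nc2}"
proof
  fix x assume x: "x \<in> mat_kernel D"
  have x_carrier: "x \<in> carrier_vec nc2" and Dx: "D *\<^sub>v x = 0\<^sub>v nr2"
    using mat_kernel_carrier[OF D] mat_kernelD[OF D] x by auto
  have zero_mult: "A *\<^sub>v 0\<^sub>v nc1 = 0\<^sub>v nr1" "C *\<^sub>v 0\<^sub>v nc1 = 0\<^sub>v nr2"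
    "0\<^sub>m nr1 nc2 *\<^sub>v x = 0\<^sub>v nr1"
    using A C x_carrier by (intro eq_vecI; simp add: scalar_prod_def)+
  have "four_block_mat A (0\<^sub>m nr1 nc2) C D *\<^sub>v (0\<^sub>v nc1 @\<^sub>v x)
      = (A *\<^sub>v 0\<^sub>v nc1 + 0\<^sub>m nr1 nc2 *\<^sub>v x) @\<^sub>v (C *\<^sub>v 0\<^sub>v nc1 + D *\<^sub>v x)"
    by (rule four_block_mat_mult_vec[OF A zero_carrier_mat C D zero_carrier_vec x_carrier])
  also have "\<dots> = 0\<^sub>v (nr1 + nr2)"
    unfolding zero_mult Dx by (rule eq_vecI) auto
  finally have "0\<^sub>v nc1 @\<^sub>v x \<in> mat_kernel (four_block_mat A (0\<^sub>m nr1 nc2) C D)"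
    using x_carrier by (intro mat_kernelI[OF four_block_carrier_mat[OF A D]]) auto
  then have "0\<^sub>v nc1 @\<^sub>v x = 0\<^sub>v (nc1 + nc2)"
    using ker by blast
  moreover have "0\<^sub>v nc1 @\<^sub>v 0\<^sub>v nc2 = (0\<^sub>v (nc1 + nc2) :: 'a vec)"
    by auto
  ultimately have "0\<^sub>v nc1 @\<^sub>v x = 0\<^sub>v nc1 @\<^sub>v 0\<^sub>v nc2"
    by simp
  then show "x \<in> {0\<^sub>v nc2}"
    using append_vec_eq[of "0\<^sub>v nc1" nc1 "0\<^sub>v nc1" x "0\<^sub>v nc2"] by simp
qed

lemma P_RD_carrier: "P_RD T b1 b2 Pp \<in> carrier_mat (b2 * (T - b1)) ((T - b1) * b2)"
  by (simp add: P_RD_def Let_def)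

lemma index_P_RD:
  assumes "r < b2 * (T - b1)" "c < (T - b1) * b2"
  shows "P_RD T b1 b2 Pp $$ (r, c) =
    (if b2 + c div b2 - r div (T - b1) \<le> T - b1
     then Pp (b2 + c div b2 - r div (T - b1)) $$ (r mod (T - b1), c mod b2) else 0)"
  using assms by (simp add: P_RD_def Let_def)

lemma P_RD_last_block_column:
  fixes T b1 b2 :: nat and Pp :: "nat \<Rightarrow> 'a::field mat"
  defines "k \<equiv> T - b1"
  assumes k: "0 < k" and b2: "0 < b2" and Pk: "Pp k \<in> carrier_mat k b2"
  obtains A C where "A \<in> carrier_mat ((b2 - 1) * k) ((k - 1) * b2)"
    and "C \<in> carrier_mat k ((k - 1) * b2)"
    and "P_RD T b1 b2 Pp = four_block_mat A (0\<^sub>m ((b2 - 1) * k) b2) C (Pp k)"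
proof -
  let ?M = "P_RD T b1 b2 Pp"
  obtain A B C D where split: "split_block ?M ((b2 - 1) * k) ((k - 1) * b2) = (A, B, C, D)"
    by (metis prod_cases4)
  have M: "?M \<in> carrier_mat (b2 * k) (k * b2)"
    unfolding k_def by (rule P_RD_carrier)
  have rows: "b2 * k = (b2 - 1) * k + k" and cols: "k * b2 = (k - 1) * b2 + b2"
    using k b2 by (cases b2; cases k; simp)+
  have dims: "dim_row ?M = (b2 - 1) * k + k" "dim_col ?M = (k - 1) * b2 + b2"
    using M rows cols by auto
  note blocks = split_block[OF split dims]
  have last_col_div: "(j + (k - 1) * b2) div b2 = k - 1" "(j + (k - 1) * b2) mod b2 = j"
    and last_col_bound: "j + (k - 1) * b2 < k * b2" if "j < b2" for j
    using that cols by auto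
  have "B = 0\<^sub>m ((b2 - 1) * k) b2"
  proof (rule eq_matI)
    fix i j
    assume "i < dim_row (0\<^sub>m ((b2 - 1) * k) b2 :: 'a mat)"
      and "j < dim_col (0\<^sub>m ((b2 - 1) * k) b2 :: 'a mat)"
    then have i: "i < (b2 - 1) * k" and j: "j < b2" by auto
    have "i div k < b2 - 1" using i by (simp add: less_mult_imp_div_less)
    moreover have "i < b2 * k" using i rows by linarith
    ultimately have "?M $$ (i, j + (k - 1) * b2) = 0"
      using index_P_RD[of i b2 T b1 "j + (k - 1) * b2" Pp, folded k_def] last_col_div[OF j]
        last_col_bound[OF j]
      by auto
    then show "B $$ (i, j) = 0\<^sub>m ((b2 - 1) * k) b2 $$ (i, j)"
      using split i j dims unfolding split_block_def Let_def by auto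
  qed (use blocks in auto)
  moreover have "D = Pp k"
  proof (rule eq_matI)
    fix i j assume "i < dim_row (Pp k)" "j < dim_col (Pp k)"
    then have i: "i < k" and j: "j < b2" using Pk by auto
    have "(i + (b2 - 1) * k) div k = b2 - 1" "(i + (b2 - 1) * k) mod k = i" using i by auto
    moreover have "i + (b2 - 1) * k < b2 * k" using i rows by linarith
    moreover have "b2 + (k - 1) - (b2 - 1) = k" using k b2 by simp
    ultimately have "?M $$ (i + (b2 - 1) * k, j + (k - 1) * b2) = Pp k $$ (i, j)"
      using index_P_RD[of "i + (b2 - 1) * k" b2 T b1 "j + (k - 1) * b2" Pp, folded k_def]
        last_col_div[OF j] last_col_bound[OF j]
      by auto
    then show "D $$ (i, j) = Pp k $$ (i, j)"
      using split i j dims unfolding split_block_def Let_def by auto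
  qed (use blocks Pk in auto)
  ultimately show thesis
    using that blocks by auto
qed

theorem mainTheorem11:
  fixes T b1 b2 :: nat and Pp :: "nat \<Rightarrow> 'a::field mat"
  assumes "0 < b1" and "b1 < b2" and "b1 + b2 \<le> T"
    and "\<And>l. l \<le> T - b1 \<Longrightarrow> Pp l \<in> carrier_mat (T - b1) b2"
    and "invertible_mat (P_RD T b1 b2 Pp)"
  shows "vec_space.rank (T - b1) (Pp (T - b1)) = b2"
proof -
  define k where "k = T - b1"
  have k: "0 < k" and b2: "0 < b2" using assms(1-3) by (auto simp: k_def)
  have Pk: "Pp k \<in> carrier_mat k b2" using assms(4) by (simp add: k_def)
  obtain A C where A: "A \<in> carrier_mat ((b2 - 1) * k) ((k - 1) * b2)"
    and C: "C \<in> carrier_mat k ((k - 1) * b2)"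
    and blocks: "P_RD T b1 b2 Pp = four_block_mat A (0\<^sub>m ((b2 - 1) * k) b2) C (Pp k)"
    using P_RD_last_block_column[of T b1 b2 Pp, folded k_def] k b2 Pk by blast
  have "P_RD T b1 b2 Pp \<in> carrier_mat (k * b2) (k * b2)"
    using P_RD_carrier[of T b1 b2 Pp, folded k_def] by (simp add: mult.commute)
  then have "mat_kernel (P_RD T b1 b2 Pp) \<subseteq> {0\<^sub>v (k * b2)}"
    using assms(5) by (rule invertible_mat_kernel_trivial)
  moreover have "k * b2 = (k - 1) * b2 + b2" using k by (cases k) auto
  ultimately have "mat_kernel (Pp k) \<subseteq> {0\<^sub>v b2}"
    using mat_kernel_lower_right_block_trivial[OF A C Pk] blocks by simp
  then show ?thesis
    using vec_space.rank_eq_if_mat_kernel_trivial[OF Pk] by (simp add: k_def)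
qed

end
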